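(* Let $A$ be a Noetherian ring, $I$ an ideal of $A$ with system of generators $(y_1,\ldots,y_m)$, and $\hat A$ the $I$-adic completion of $A$. Let $B$ be a subring of $A$ such that $y_1,\ldots,y_m\in B$ and $y_1,\ldots,y_m$ generate the ideal $B\cap I$ of $B$. Then, in $\hat A$, every element $f\in B$ can be written as $$f=\sum_{\beta\in\mathbb{Z}^m_{\geqslant0}}c_\beta\,y^\beta$$ with all coefficients $c_\beta\in((A\setminus I)\cap B)\cup\{0\}$.
   Context: $y^\beta=y_1^{\beta_1}\cdots y_m^{\beta_m}$; the series converges $I$-adically in $\hat A$. *)

theory Defs
  imports Main
begin

text \<open>Ideals of a subring B (given as a subset of the ambient commutative ring).
  Ideals of the whole ring are the case B = UNIV.\<close>
definition is_ideal_in :: "'a::comm_ring_1 set \<Rightarrow> 'a set \<Rightarrow> bool" where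
  "is_ideal_in B J \<longleftrightarrow> J \<subseteq> B \<and> 0 \<in> J \<and> (\<forall>x\<in>J. \<forall>y\<in>J. x + y \<in> J)
      \<and> (\<forall>b\<in>B. \<forall>x\<in>J. b * x \<in> J)"

definition ideal_gen_in :: "'a::comm_ring_1 set \<Rightarrow> 'a set \<Rightarrow> 'a set" where
  "ideal_gen_in B S = \<Inter>{J. is_ideal_in B J \<and> S \<subseteq> J}"

definition is_subring :: "'a::comm_ring_1 set \<Rightarrow> bool" where
  "is_subring B \<longleftrightarrow> 0 \<in> B \<and> 1 \<in> B \<and> (\<forall>x\<in>B. \<forall>y\<in>B. x + y \<in> B \<and> x * y \<in> B)
      \<and> (\<forall>x\<in>B. - x \<in> B)"

definition noetherian_ring :: "'a::comm_ring_1 itself \<Rightarrow> bool" where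
  "noetherian_ring _ \<longleftrightarrow>
     (\<forall>J::'a set. is_ideal_in UNIV J \<longrightarrow> (\<exists>S. finite S \<and> J = ideal_gen_in UNIV S))"

fun ideal_pow :: "'a::comm_ring_1 set \<Rightarrow> nat \<Rightarrow> 'a set" where
  "ideal_pow I 0 = UNIV"
| "ideal_pow I (Suc n) = ideal_gen_in UNIV {a * b | a b. a \<in> I \<and> b \<in> ideal_pow I n}"

text \<open>Multi-indices in Z_{>=0}^m, represented as functions vanishing from m on.\<close>
definition multiidx :: "nat \<Rightarrow> (nat \<Rightarrow> nat) set" where
  "multiidx m = {\<beta>. \<forall>i\<ge>m. \<beta> i = 0}"

definition monom_pow :: "nat \<Rightarrow> (nat \<Rightarrow> 'a::comm_ring_1) \<Rightarrow> (nat \<Rightarrow> nat) \<Rightarrow> 'a" where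
  "monom_pow m y \<beta> = (\<Prod>i<m. y i ^ \<beta> i)"

text \<open>The family (t x) over X sums I-adically to f in the I-adic completion:
  the net of finite partial sums converges to (the image of) f, i.e. for every n
  the finite partial sums are eventually congruent to f modulo I^n
  (the topology of the completion is given by the kernels of the maps to A/I^n).\<close>
definition adic_has_sum :: "'a::comm_ring_1 set \<Rightarrow> ('b \<Rightarrow> 'a) \<Rightarrow> 'b set \<Rightarrow> 'a \<Rightarrow> bool" where
  "adic_has_sum I t X f \<longleftrightarrow>
     (\<forall>n. \<exists>F0. finite F0 \<and> F0 \<subseteq> X \<and>
        (\<forall>F. finite F \<and> F0 \<subseteq> F \<and> F \<subseteq> X \<longrightarrow> f - sum t F \<in> ideal_pow I n))"

end

theory Submission
  imports Defs
begin

text \<open>Write f = (sum over |\<beta>| < n of c(\<beta>) y^\<beta>) + (sum over |\<beta>| = n of b(\<beta>) y^\<beta>)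
  with all b(\<beta>) in B, starting from n = 0 with b(0) = f. Each b(\<beta>) not in I becomes the
  final coefficient c(\<beta>); each b(\<beta>) in B \<inter> I is a B-linear combination of the y_i, so
  b(\<beta>) y^\<beta> is a B-linear combination of monomials of degree n + 1, which gives the
  representation for n + 1. The remainder of degree n lies in I^n, so the resulting series
  converges I-adically to f.\<close>

lemma ideal_gen_in_generator: "x \<in> S \<Longrightarrow> x \<in> ideal_gen_in B S"
  unfolding ideal_gen_in_def by blast

lemma ideal_gen_in_least: "is_ideal_in B J \<Longrightarrow> S \<subseteq> J \<Longrightarrow> ideal_gen_in B S \<subseteq> J"
  unfolding ideal_gen_in_def by blast

lemma ideal_gen_in_mono: "S \<subseteq> T \<Longrightarrow> ideal_gen_in B S \<subseteq> ideal_gen_in B T"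
  unfolding ideal_gen_in_def by blast

lemma is_ideal_ideal_gen_in: "is_ideal_in UNIV (ideal_gen_in UNIV S)"
  unfolding is_ideal_in_def ideal_gen_in_def by auto

lemma is_ideal_ideal_pow: "is_ideal_in UNIV (ideal_pow I n)"
  by (cases n) (simp_all only: ideal_pow.simps is_ideal_ideal_gen_in, simp add: is_ideal_in_def)

lemma ideal_mult_closed: "is_ideal_in UNIV J \<Longrightarrow> x \<in> J \<Longrightarrow> a * x \<in> J"
  unfolding is_ideal_in_def by blast

lemma ideal_diff_closed:
  assumes "is_ideal_in UNIV J" "x \<in> J" "z \<in> J"
  shows "x - z \<in> J"
proof -
  have "x + (-1) * z \<in> J"
    using assms unfolding is_ideal_in_def by blast
  then show ?thesis by simp
qed

lemma ideal_sum_closed: "is_ideal_in UNIV J \<Longrightarrow> (\<And>x. x \<in> A \<Longrightarrow> g x \<in> J) \<Longrightarrow> sum g A \<in> J"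
  by (induction A rule: infinite_finite_induct) (auto simp: is_ideal_in_def)

lemma subring_sum_closed: "is_subring B \<Longrightarrow> (\<And>x. x \<in> A \<Longrightarrow> g x \<in> B) \<Longrightarrow> sum g A \<in> B"
  by (induction A rule: infinite_finite_induct) (auto simp: is_subring_def)

lemma ideal_pow_Suc_subset: "ideal_pow I (Suc n) \<subseteq> ideal_pow I n"
proof (induction n)
  case (Suc n)
  then have "{a * b |a b. a \<in> I \<and> b \<in> ideal_pow I (Suc n)}
      \<subseteq> {a * b |a b. a \<in> I \<and> b \<in> ideal_pow I n}" by blast
  then show ?case
    unfolding ideal_pow.simps(2) by (rule ideal_gen_in_mono)
qed simp

lemma ideal_pow_antimono: "k \<le> n \<Longrightarrow> ideal_pow I n \<subseteq> ideal_pow I k"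
  by (induction rule: dec_induct) (use ideal_pow_Suc_subset in blast)+

lemma ideal_pow_mult_Suc: "a \<in> I \<Longrightarrow> x \<in> ideal_pow I k \<Longrightarrow> a * x \<in> ideal_pow I (Suc k)"
  unfolding ideal_pow.simps(2) by (rule ideal_gen_in_generator) blast

lemma ideal_pow_power_mult: "a \<in> I \<Longrightarrow> x \<in> ideal_pow I k \<Longrightarrow> a ^ p * x \<in> ideal_pow I (p + k)"
proof (induction p)
  case (Suc p)
  then have "a * (a ^ p * x) \<in> ideal_pow I (Suc (p + k))" by (intro ideal_pow_mult_Suc)
  then show ?case by (simp add: mult.assoc)
qed simp

lemma prod_power_in_ideal_pow:
  assumes "finite A" "\<And>i. i \<in> A \<Longrightarrow> y i \<in> I"
  shows "(\<Prod>i\<in>A. y i ^ \<beta> i) \<in> ideal_pow I (\<Sum>i\<in>A. \<beta> i)"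
  using assms by (induction A rule: finite_induct) (simp_all add: ideal_pow_power_mult)

lemma ideal_gen_in_linear_combination:
  fixes m :: nat
  assumes sub: "is_subring B" and yB: "\<forall>i<m. y i \<in> B"
    and x: "x \<in> ideal_gen_in B (y ` {..<m})"
  shows "\<exists>g. (\<forall>i<m. g i \<in> B) \<and> x = (\<Sum>i<m. g i * y i)"
proof -
  let ?J = "{\<Sum>i<m. g i * y i | g. \<forall>i<m. g i \<in> B}"
  have "y ` {..<m} \<subseteq> ?J"
  proof
    fix z assume "z \<in> y ` {..<m}"
    then obtain j where j: "j < m" "z = y j" by auto
    have "(\<Sum>i<m. (if i = j then 1 else 0) * y i) = (\<Sum>i<m. if i = j then y i else 0)"
      by (rule sum.cong) auto
    also have "\<dots> = y j" using j by simp
    finally have "(\<Sum>i<m. (if i = j then 1 else 0) * y i) = y j" .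
    moreover have "\<forall>i<m. (if i = j then 1 else 0) \<in> B"
      using sub by (simp add: is_subring_def)
    ultimately show "z \<in> ?J" using j by force
  qed
  moreover have "is_ideal_in B ?J"
    unfolding is_ideal_in_def
  proof (intro conjI ballI subsetI)
    fix z assume "z \<in> ?J"
    then show "z \<in> B"
      using sub yB by (force intro!: subring_sum_closed simp: is_subring_def)
  next
    have "(0::'a) = (\<Sum>i<m. 0 * y i)" by simp
    then show "0 \<in> ?J" using sub by (force simp: is_subring_def)
  next
    fix z w assume "z \<in> ?J" "w \<in> ?J"
    then obtain g h where g: "\<forall>i<m. g i \<in> B" "z = (\<Sum>i<m. g i * y i)"
      and h: "\<forall>i<m. h i \<in> B" "w = (\<Sum>i<m. h i * y i)" by blast
    then have "z + w = (\<Sum>i<m. (g i + h i) * y i)"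
      by (simp add: sum.distrib distrib_right)
    moreover have "\<forall>i<m. g i + h i \<in> B" using g h sub by (simp add: is_subring_def)
    ultimately show "z + w \<in> ?J" by force
  next
    fix b z assume b: "b \<in> B" and "z \<in> ?J"
    then obtain g where g: "\<forall>i<m. g i \<in> B" "z = (\<Sum>i<m. g i * y i)" by blast
    then have "b * z = (\<Sum>i<m. (b * g i) * y i)"
      by (simp add: sum_distrib_left mult.assoc)
    moreover have "\<forall>i<m. b * g i \<in> B" using g b sub by (simp add: is_subring_def)
    ultimately show "b * z \<in> ?J" by force
  qed
  ultimately show ?thesis
    using x ideal_gen_in_least by blast
qed

definition multideg :: "nat \<Rightarrow> (nat \<Rightarrow> nat) \<Rightarrow> nat" where
  "multideg m \<beta> = (\<Sum>i<m. \<beta> i)"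

definition multiidx_deg :: "nat \<Rightarrow> nat \<Rightarrow> (nat \<Rightarrow> nat) set" where
  "multiidx_deg m n = {\<beta> \<in> multiidx m. multideg m \<beta> = n}"

definition multiidx_below :: "nat \<Rightarrow> nat \<Rightarrow> (nat \<Rightarrow> nat) set" where
  "multiidx_below m n = {\<beta> \<in> multiidx m. multideg m \<beta> < n}"

lemma finite_multiidx_deg_le: "finite {\<beta> \<in> multiidx m. multideg m \<beta> \<le> N}"
proof (rule finite_subset)
  show "{\<beta> \<in> multiidx m. multideg m \<beta> \<le> N}
     \<subseteq> {\<beta>. \<forall>i. (i \<in> {..<m} \<longrightarrow> \<beta> i \<in> {..N}) \<and> (i \<notin> {..<m} \<longrightarrow> \<beta> i = 0)}"
    by (auto simp: multiidx_def multideg_def intro: order.trans[OF member_le_sum])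
qed (intro finite_set_of_finite_funs; simp)

lemma finite_multiidx_deg: "finite (multiidx_deg m n)"
  by (rule finite_subset[OF _ finite_multiidx_deg_le[of m n]]) (auto simp: multiidx_deg_def)

lemma finite_multiidx_below: "finite (multiidx_below m n)"
  by (rule finite_subset[OF _ finite_multiidx_deg_le[of m n]]) (auto simp: multiidx_below_def)

lemma multiidx_deg_0: "multiidx_deg m 0 = {\<lambda>_. 0}"
  by (auto simp: multiidx_deg_def multiidx_def multideg_def not_less[symmetric])

lemma multiidx_below_Suc: "multiidx_below m (Suc n) = multiidx_below m n \<union> multiidx_deg m n"
  unfolding multiidx_below_def multiidx_deg_def by auto

lemma multiidx_bump: "i < m \<Longrightarrow> \<beta> \<in> multiidx m \<Longrightarrow> \<beta>(i := Suc (\<beta> i)) \<in> multiidx m"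
  unfolding multiidx_def by auto

lemma multideg_bump: "i < m \<Longrightarrow> multideg m (\<beta>(i := Suc (\<beta> i))) = Suc (multideg m \<beta>)"
proof -
  assume i: "i < m"
  have "multideg m (\<beta>(i := Suc (\<beta> i))) = (\<Sum>j<m. (if j = i then 1 else 0) + \<beta> j)"
    unfolding multideg_def by (rule sum.cong) auto
  also have "\<dots> = Suc (multideg m \<beta>)" using i by (simp add: sum.distrib multideg_def)
  finally show ?thesis .
qed

lemma monom_pow_bump: "i < m \<Longrightarrow> monom_pow m y (\<beta>(i := Suc (\<beta> i))) = y i * monom_pow m y \<beta>"
proof -
  assume i: "i < m"
  have "monom_pow m y (\<beta>(i := Suc (\<beta> i))) = (\<Prod>j<m. (if j = i then y j else 1) * y j ^ \<beta> j)"
    unfolding monom_pow_def by (rule prod.cong) auto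
  also have "\<dots> = y i * monom_pow m y \<beta>" using i by (simp add: prod.distrib monom_pow_def)
  finally show ?thesis .
qed

lemma monom_pow_in_ideal_pow:
  assumes "\<forall>i<m. y i \<in> I" "k \<le> multideg m \<beta>"
  shows "monom_pow m y \<beta> \<in> ideal_pow I k"
  using prod_power_in_ideal_pow[of "{..<m}" y I \<beta>] ideal_pow_antimono[OF assms(2), of I] assms(1)
  unfolding monom_pow_def multideg_def by blast

definition part_in :: "'a::comm_ring_1 set \<Rightarrow> 'a \<Rightarrow> 'a" where
  "part_in I x = (if x \<in> I then x else 0)"

definition part_out :: "'a::comm_ring_1 set \<Rightarrow> 'a \<Rightarrow> 'a" where
  "part_out I x = (if x \<in> I then 0 else x)"

lemma part_out_plus_part_in: "part_out I x + part_in I x = x"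
  unfolding part_out_def part_in_def by simp

text \<open>The coefficients b(\<beta>) of the degree-n remainder; G x i is a chosen coefficient of y_i
  in a representation of x \<in> B \<inter> I, and the contribution G x i y_i y^\<beta> is credited to
  the raised index \<beta> + e_i.\<close>
fun remainder_coeff :: "'a::comm_ring_1 set \<Rightarrow> nat \<Rightarrow> ('a \<Rightarrow> nat \<Rightarrow> 'a) \<Rightarrow> 'a \<Rightarrow> nat
    \<Rightarrow> (nat \<Rightarrow> nat) \<Rightarrow> 'a" where
  "remainder_coeff I m G f 0 = (\<lambda>\<beta>. if \<beta> = (\<lambda>_. 0) then f else 0)"
| "remainder_coeff I m G f (Suc n) = (\<lambda>\<gamma>. \<Sum>\<beta>\<in>multiidx_deg m n. \<Sum>i<m.
      if \<beta>(i := Suc (\<beta> i)) = \<gamma> then G (part_in I (remainder_coeff I m G f n \<beta>)) i else 0)"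

lemma remainder_coeff_in_subring:
  assumes sub: "is_subring B" and I0: "0 \<in> I"
    and G: "\<forall>x\<in>B \<inter> I. \<forall>i<m. G x i \<in> B" and fB: "f \<in> B"
  shows "remainder_coeff I m G f n \<beta> \<in> B"
proof (induction n arbitrary: \<beta>)
  case 0
  then show ?case using fB sub by (simp add: is_subring_def)
next
  case (Suc n)
  have "part_in I (remainder_coeff I m G f n \<beta>') \<in> B \<inter> I" for \<beta>'
    using Suc.IH I0 sub by (simp add: part_in_def is_subring_def)
  then show ?case
    using G sub by (auto intro!: subring_sum_closed simp: is_subring_def)
qed

lemma remainder_coeff_Suc_sum:
  assumes G: "\<forall>x\<in>B \<inter> I. x = (\<Sum>i<m. G x i * y i)"
    and bB: "\<And>\<beta>. remainder_coeff I m G f n \<beta> \<in> B" and B0: "0 \<in> B" and I0: "0 \<in> I"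
  shows "(\<Sum>\<gamma>\<in>multiidx_deg m (Suc n). remainder_coeff I m G f (Suc n) \<gamma> * monom_pow m y \<gamma>)
       = (\<Sum>\<beta>\<in>multiidx_deg m n. part_in I (remainder_coeff I m G f n \<beta>) * monom_pow m y \<beta>)"
proof -
  define d where "d \<beta> = part_in I (remainder_coeff I m G f n \<beta>)" for \<beta>
  define P where "P \<gamma> = monom_pow m y \<gamma>" for \<gamma>
  let ?D = "multiidx_deg m n" and ?D' = "multiidx_deg m (Suc n)"
  let ?t = "\<lambda>\<beta> i \<gamma>. if \<beta>(i := Suc (\<beta> i)) = \<gamma> then G (d \<beta>) i * P \<gamma> else 0"
  have bump: "\<beta>(i := Suc (\<beta> i)) \<in> ?D'" if "\<beta> \<in> ?D" "i < m" for \<beta> i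
    using that multiidx_bump multideg_bump unfolding multiidx_deg_def by auto
  have "(\<Sum>\<gamma>\<in>?D'. remainder_coeff I m G f (Suc n) \<gamma> * P \<gamma>) = (\<Sum>\<gamma>\<in>?D'. \<Sum>\<beta>\<in>?D. \<Sum>i<m. ?t \<beta> i \<gamma>)"
    by (rule sum.cong) (auto simp: sum_distrib_right d_def intro!: sum.cong)
  also have "\<dots> = (\<Sum>\<beta>\<in>?D. \<Sum>i<m. \<Sum>\<gamma>\<in>?D'. ?t \<beta> i \<gamma>)"
    by (subst sum.swap) (rule sum.cong[OF refl], rule sum.swap)
  also have "\<dots> = (\<Sum>\<beta>\<in>?D. \<Sum>i<m. G (d \<beta>) i * P (\<beta>(i := Suc (\<beta> i))))"
    by (intro sum.cong refl) (simp add: finite_multiidx_deg bump)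
  also have "\<dots> = (\<Sum>\<beta>\<in>?D. (\<Sum>i<m. G (d \<beta>) i * y i) * P \<beta>)"
    by (intro sum.cong refl) (simp add: sum_distrib_right P_def monom_pow_bump mult.assoc)
  also have "\<dots> = (\<Sum>\<beta>\<in>?D. d \<beta> * P \<beta>)"
  proof (intro sum.cong refl)
    fix \<beta>
    have "d \<beta> \<in> B \<inter> I" using bB B0 I0 by (simp add: d_def part_in_def)
    then show "(\<Sum>i<m. G (d \<beta>) i * y i) * P \<beta> = d \<beta> * P \<beta>" using G by metis
  qed
  finally show ?thesis unfolding d_def P_def .
qed

lemma remainder_expansion:
  assumes sub: "is_subring B" and I0: "0 \<in> I"
    and G: "\<forall>x\<in>B \<inter> I. (\<forall>i<m. G x i \<in> B) \<and> x = (\<Sum>i<m. G x i * y i)"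
    and fB: "f \<in> B"
  shows "f = (\<Sum>\<beta>\<in>multiidx_below m n.
              part_out I (remainder_coeff I m G f (multideg m \<beta>) \<beta>) * monom_pow m y \<beta>)
           + (\<Sum>\<beta>\<in>multiidx_deg m n. remainder_coeff I m G f n \<beta> * monom_pow m y \<beta>)"
proof (induction n)
  case 0
  have "multiidx_below m 0 = {}" by (simp add: multiidx_below_def)
  then show ?case by (simp add: multiidx_deg_0 monom_pow_def)
next
  case (Suc n)
  define c where "c \<beta> = part_out I (remainder_coeff I m G f (multideg m \<beta>) \<beta>) * monom_pow m y \<beta>"
    for \<beta>
  define b where "b = remainder_coeff I m G f n"
  have B0: "0 \<in> B" using sub by (simp add: is_subring_def)
  have bB: "b \<beta> \<in> B" for \<beta>
    unfolding b_def using remainder_coeff_in_subring[OF sub I0 _ fB] G by blast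
  have "(\<Sum>\<beta>\<in>multiidx_deg m n. b \<beta> * monom_pow m y \<beta>)
      = (\<Sum>\<beta>\<in>multiidx_deg m n. c \<beta> + part_in I (b \<beta>) * monom_pow m y \<beta>)"
    by (intro sum.cong refl)
      (simp add: c_def b_def multiidx_deg_def part_out_plus_part_in flip: distrib_right)
  also have "\<dots> = (\<Sum>\<beta>\<in>multiidx_deg m n. c \<beta>)
      + (\<Sum>\<gamma>\<in>multiidx_deg m (Suc n). remainder_coeff I m G f (Suc n) \<gamma> * monom_pow m y \<gamma>)"
    using remainder_coeff_Suc_sum[OF _ bB[unfolded b_def] B0 I0] G
    by (simp add: sum.distrib b_def)
  finally have "(\<Sum>\<beta>\<in>multiidx_deg m n. b \<beta> * monom_pow m y \<beta>) = \<dots>" .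
  moreover have "(\<Sum>\<beta>\<in>multiidx_below m (Suc n). c \<beta>)
      = (\<Sum>\<beta>\<in>multiidx_below m n. c \<beta>) + (\<Sum>\<beta>\<in>multiidx_deg m n. c \<beta>)"
    unfolding multiidx_below_Suc
    by (rule sum.union_disjoint[OF finite_multiidx_below finite_multiidx_deg])
      (auto simp: multiidx_below_def multiidx_deg_def)
  ultimately show ?case
    using Suc.IH by (simp add: c_def b_def add.assoc)
qed

lemma adic_has_sum_by_degree:
  assumes partial: "\<And>n. f - sum t (multiidx_below m n) \<in> ideal_pow I n"
    and small: "\<And>\<beta> n. \<beta> \<in> multiidx m \<Longrightarrow> n \<le> multideg m \<beta> \<Longrightarrow> t \<beta> \<in> ideal_pow I n"
  shows "adic_has_sum I t (multiidx m) f"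
  unfolding adic_has_sum_def
proof (intro allI exI conjI impI)
  fix n F
  show "finite (multiidx_below m n)" by (rule finite_multiidx_below)
  show "multiidx_below m n \<subseteq> multiidx m" by (auto simp: multiidx_below_def)
  assume F: "finite F \<and> multiidx_below m n \<subseteq> F \<and> F \<subseteq> multiidx m"
  have "sum t (F - multiidx_below m n) \<in> ideal_pow I n"
    using F by (intro ideal_sum_closed[OF is_ideal_ideal_pow] small)
      (auto simp: multiidx_below_def not_less)
  then have "f - sum t (multiidx_below m n) - sum t (F - multiidx_below m n) \<in> ideal_pow I n"
    by (rule ideal_diff_closed[OF is_ideal_ideal_pow partial])
  moreover have "sum t F = sum t (F - multiidx_below m n) + sum t (multiidx_below m n)"
    using F by (intro sum.subset_diff) auto
  ultimately show "f - sum t F \<in> ideal_pow I n"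
    by (simp add: algebra_simps)
qed

theorem mainTheorem18:
  fixes I B :: "'a::comm_ring_1 set" and y :: "nat \<Rightarrow> 'a" and m :: nat
  assumes "noetherian_ring TYPE('a)"
    and "I = ideal_gen_in UNIV (y ` {..<m})"
    and "is_subring B"
    and "\<forall>i<m. y i \<in> B"
    and "B \<inter> I = ideal_gen_in B (y ` {..<m})"
  shows "\<forall>f\<in>B. \<exists>c :: (nat \<Rightarrow> nat) \<Rightarrow> 'a.
           (\<forall>\<beta>\<in>multiidx m. c \<beta> \<in> ((UNIV - I) \<inter> B) \<union> {0})
         \<and> adic_has_sum I (\<lambda>\<beta>. c \<beta> * monom_pow m y \<beta>) (multiidx m) f"
proof
  fix f assume fB: "f \<in> B"
  note I = assms(2) and sub = assms(3) and yB = assms(4) and BI = assms(5)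
  have I0: "0 \<in> I" and yI: "\<forall>i<m. y i \<in> I"
    unfolding I by (auto simp: ideal_gen_in_def is_ideal_in_def)
  obtain G where G: "\<forall>x\<in>B \<inter> I. (\<forall>i<m. G x i \<in> B) \<and> x = (\<Sum>i<m. G x i * y i)"
    using ideal_gen_in_linear_combination[OF sub yB] BI by metis
  define c where "c \<beta> = part_out I (remainder_coeff I m G f (multideg m \<beta>) \<beta>)" for \<beta>
  let ?t = "\<lambda>\<beta>. c \<beta> * monom_pow m y \<beta>"
  have "\<forall>\<beta>\<in>multiidx m. c \<beta> \<in> ((UNIV - I) \<inter> B) \<union> {0}"
    using remainder_coeff_in_subring[OF sub I0 _ fB] G by (auto simp: c_def part_out_def)
  moreover have "adic_has_sum I ?t (multiidx m) f"
  proof (rule adic_has_sum_by_degree)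
    fix n
    have "f - sum ?t (multiidx_below m n)
        = (\<Sum>\<beta>\<in>multiidx_deg m n. remainder_coeff I m G f n \<beta> * monom_pow m y \<beta>)"
      using remainder_expansion[OF sub I0 G fB, of n] by (simp add: c_def algebra_simps)
    then show "f - sum ?t (multiidx_below m n) \<in> ideal_pow I n"
      using yI by (auto simp: multiidx_deg_def intro!: ideal_sum_closed[OF is_ideal_ideal_pow]
          ideal_mult_closed[OF is_ideal_ideal_pow] monom_pow_in_ideal_pow)
  qed (use yI in \<open>auto intro!: ideal_mult_closed[OF is_ideal_ideal_pow] monom_pow_in_ideal_pow\<close>)
  ultimately show "\<exists>c. (\<forall>\<beta>\<in>multiidx m. c \<beta> \<in> ((UNIV - I) \<inter> B) \<union> {0})
      \<and> adic_has_sum I (\<lambda>\<beta>. c \<beta> * monom_pow m y \<beta>) (multiidx m) f" by blast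
qed

end
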